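(* An irregular LDPC code satisfies the stability condition under binary message-passing decoding (using quantized or unquantized channel messages) if and only if the variable node degree distribution satisfies \[ \left(\lambda_{2} + 2\epsilon_{ch}\lambda_{3}\right)\left(d_{c}-1\right) < 1, \] where $\epsilon_{ch}$ denotes the error probability of a hard decision of the channel messages.
   Context: Consider check-regular LDPC codes in which every check node has degree $d_c$, and let $\lambda_i$ denote the fraction of edges connected to variable nodes of degree $i$ (edge-perspective variable node degree distribution). Transmission is over a binary-input symmetric-output channel (e.g. a binary-input AWGN channel); the channel output, converted to an L-value $L_{ch}$, is either used unquantized, hard-decided, or quantized into sign plus magnitude index $w=0,\ldots,W$ (equivalently, decomposed into binary symmetric sub-channels $w$ used with probability $p_w$ and having crossover probability $\epsilon_{ch,w}$, so that $\epsilon_{ch}=\sum_w p_w\epsilon_{ch,w}$). In the binary message-passing decoder, variable and check nodes exchange only binary messages in $\{+1,-1\}$: a check node outputs on each edge the product of its other $d_c-1$ incoming messages; a variable node of degree $d_v$ converts each incoming binary message from a binary symmetric channel with crossover probability $\epsilon$ to the L-value $y\log\frac{1-\epsilon}{\epsilon}$ (assuming it knows the crossover probabilities of the channel and of the check-to-variable messages), computes $L_{ev,j}=L_{ch}+\sum_{i\neq j}L_{av,i}$ for each edge $j$, and sends the sign of $L_{ev,j}$. The stability condition means that the decoder's message error probability decreases to zero when started from a sufficiently small error probability, i.e. the derivative of the one-iteration error-probability update at zero is less than one. *)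

theory Defs
  imports "HOL-Probability.Probability"
begin

text \<open>Error indicator for the sign decision at a variable node (transmitted bit +1):
  a negative extrinsic L-value is an error, a zero L-value (tie) is resolved by a fair
  coin, i.e. counts as an error with probability 1/2.\<close>
definition sign_err :: "real \<Rightarrow> real" where
  "sign_err x = (if x < 0 then 1 else if x = 0 then 1/2 else 0)"

definition bsc_L :: "real \<Rightarrow> real" where
  "bsc_L e = ln ((1 - e) / e)"

text \<open>Check node: error probability of the outgoing message when each of the other
  dc-1 incoming messages is wrong independently with probability x.\<close>
definition cn_err :: "nat \<Rightarrow> real \<Rightarrow> real" where
  "cn_err dc x = (1 - (1 - 2 * x) ^ (dc - 1)) / 2"

text \<open>Variable node of degree dv attached to channel sub-channel with crossover e,
  incoming check-to-variable messages wrong with probability p: error probability of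
  the outgoing binary message (sign of L_ch + sum of the other dv-1 L-values).\<close>
definition vn_err :: "nat \<Rightarrow> real \<Rightarrow> real \<Rightarrow> real" where
  "vn_err dv e p =
     (\<Sum>k\<le>dv - 1. real ((dv - 1) choose k) * p ^ k * (1 - p) ^ (dv - 1 - k) *
        ((1 - e) * sign_err (bsc_L e + (real (dv - 1) - 2 * real k) * bsc_L p)
         + e * sign_err (- bsc_L e + (real (dv - 1) - 2 * real k) * bsc_L p)))"

text \<open>One iteration of density evolution for the binary message passing decoder:
  maps the variable-to-check message error probability x to the new one.  The channel
  is given as a distribution M of the sub-channel crossover probabilities
  (finite for quantized / hard-decided channels, continuous for unquantized ones);
  lam i is the fraction of edges at variable nodes of degree i (degrees 2..dmax).\<close>
definition bmp_update ::
  "real measure \<Rightarrow> (nat \<Rightarrow> real) \<Rightarrow> nat \<Rightarrow> nat \<Rightarrow> real \<Rightarrow> real" where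
  "bmp_update M lam dmax dc x =
     (if x = 0 then 0
      else (\<Sum>i\<in>{2..dmax}. lam i * (\<integral>e. vn_err i e (cn_err dc x) \<partial>M)))"

definition bmp_stable :: "real measure \<Rightarrow> (nat \<Rightarrow> real) \<Rightarrow> nat \<Rightarrow> nat \<Rightarrow> bool" where
  "bmp_stable M lam dmax dc \<longleftrightarrow>
     (\<exists>D. (bmp_update M lam dmax dc has_real_derivative D) (at_right 0) \<and> D < 1)"

end

theory Submission
  imports Defs "HOL-Real_Asymp.Real_Asymp"
begin

text \<open>When the check messages are wrong with small probability p, a variable node of degree dv
  errs, to first order in p, only if exactly one of its dv - 1 incoming check messages is wrong.
  For dv = 2 this message outweighs the channel; for dv = 3 it cancels the other check message,
  so the channel decides and errs with probability e; for dv \<ge> 4 it is outvoted. Hence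
  vn_err dv e p = s p + O(p^2) with s = 1, 2 e, 0 respectively, and vn_err dv e p \<le> C p
  uniformly in e. The check node error has slope dc - 1 at 0, so by dominated convergence the
  update has right derivative (lam 2 + 2 E[e] lam 3)(dc - 1) at 0.\<close>

lemma sign_err_nonneg: "0 \<le> sign_err x"
  and sign_err_le_one: "sign_err x \<le> 1"
  by (auto simp: sign_err_def)

lemma sign_err_pos: "0 < x \<Longrightarrow> sign_err x = 0"
  and sign_err_neg: "x < 0 \<Longrightarrow> sign_err x = 1"
  by (auto simp: sign_err_def)

lemma sign_err_measurable [measurable]: "sign_err \<in> borel_measurable borel"
  unfolding sign_err_def[abs_def] by measurable

lemma bsc_L_measurable [measurable]: "bsc_L \<in> borel_measurable borel"
  unfolding bsc_L_def[abs_def] by measurable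

lemma bsc_L_half: "bsc_L (1/2) = 0"
  by (simp add: bsc_L_def)

lemma bsc_L_strict_antimono:
  assumes "0 < p" "p < e" "e < 1"
  shows "bsc_L e < bsc_L p"
proof -
  have "(1 - e) / e = 1 / e - 1" "(1 - p) / p = 1 / p - 1"
    using assms by (auto simp: field_simps)
  moreover have "1 / e < 1 / p"
    using assms by (simp add: frac_less2)
  ultimately show ?thesis
    using assms by (simp add: bsc_L_def)
qed

lemma bsc_L_pos: "0 < p \<Longrightarrow> p < 1/2 \<Longrightarrow> 0 < bsc_L p"
  using bsc_L_strict_antimono[of p "1/2"] by (simp add: bsc_L_half)

lemma bsc_L_nonneg: "0 < p \<Longrightarrow> p \<le> 1/2 \<Longrightarrow> 0 \<le> bsc_L p"
  by (metis bsc_L_half bsc_L_pos le_less)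

lemma bsc_L_tendsto_at_right_0: "filterlim bsc_L at_top (at_right 0)"
  unfolding bsc_L_def by real_asymp

definition vn_decision_err :: "real \<Rightarrow> real \<Rightarrow> real" where
  "vn_decision_err e y = (1 - e) * sign_err (bsc_L e + y) + e * sign_err (- bsc_L e + y)"

lemma vn_err_eq_binomial_sum:
  "vn_err dv e p = (\<Sum>k\<le>dv - 1. real ((dv - 1) choose k) * p ^ k * (1 - p) ^ (dv - 1 - k) *
      vn_decision_err e ((real (dv - 1) - 2 * real k) * bsc_L p))"
  by (simp add: vn_err_def vn_decision_err_def)

lemma vn_decision_err_nonneg: "0 \<le> e \<Longrightarrow> e \<le> 1 \<Longrightarrow> 0 \<le> vn_decision_err e y"
  unfolding vn_decision_err_def by (intro add_nonneg_nonneg mult_nonneg_nonneg sign_err_nonneg) auto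

lemma vn_decision_err_le_one:
  assumes "0 \<le> e" "e \<le> 1"
  shows "vn_decision_err e y \<le> 1"
proof -
  have "vn_decision_err e y \<le> (1 - e) * 1 + e * 1"
    unfolding vn_decision_err_def
    using assms by (intro add_mono mult_left_mono sign_err_le_one) auto
  then show ?thesis by simp
qed

lemma vn_decision_err_eq_0:
  "0 \<le> bsc_L e \<Longrightarrow> bsc_L e < y \<Longrightarrow> vn_decision_err e y = 0"
  by (simp add: vn_decision_err_def sign_err_pos)

lemma vn_decision_err_eq_1:
  "0 \<le> bsc_L e \<Longrightarrow> y < - bsc_L e \<Longrightarrow> vn_decision_err e y = 1"
  by (simp add: vn_decision_err_def sign_err_neg)

lemma vn_decision_err_at_0:
  assumes "0 < e" "e \<le> 1/2"
  shows "vn_decision_err e 0 = e"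
proof (cases "e = 1/2")
  case True
  then show ?thesis unfolding True by (simp add: vn_decision_err_def bsc_L_half sign_err_def)
next
  case False
  then have "0 < bsc_L e" using assms by (simp add: bsc_L_pos)
  then show ?thesis by (simp add: vn_decision_err_def sign_err_pos sign_err_neg)
qed

lemma vn_decision_err_le:
  assumes "0 < e" "e \<le> 1/2" "0 \<le> y"
  shows "vn_decision_err e y \<le> e"
proof (cases "y = 0")
  case True
  then show ?thesis using assms by (simp add: vn_decision_err_at_0)
next
  case False
  have "sign_err (bsc_L e + y) = 0"
    using assms False bsc_L_nonneg[of e] by (intro sign_err_pos) auto
  moreover have "e * sign_err (- bsc_L e + y) \<le> e * 1"
    using assms by (intro mult_left_mono sign_err_le_one) auto
  ultimately show ?thesis by (simp add: vn_decision_err_def)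
qed

lemma binomial_tail_le:
  fixes p :: real
  assumes "0 \<le> p" "p \<le> 1" "\<And>k. 0 \<le> f k" "\<And>k. f k \<le> 1"
  shows "(\<Sum>k\<in>{m..n}. real (n choose k) * p ^ k * (1 - p) ^ (n - k) * f k) \<le> 2 ^ n * p ^ m"
proof -
  have "real (n choose k) * p ^ k * (1 - p) ^ (n - k) * f k \<le> real (n choose k) * p ^ m"
    if "k \<in> {m..n}" for k
  proof -
    have "p ^ k * ((1 - p) ^ (n - k) * f k) \<le> p ^ m * (1 * 1)"
      using that assms by (intro mult_mono power_decreasing power_le_one) auto
    then show ?thesis by (simp add: mult.assoc mult_left_mono)
  qed
  then have "(\<Sum>k\<in>{m..n}. real (n choose k) * p ^ k * (1 - p) ^ (n - k) * f k)
      \<le> (\<Sum>k\<le>n. real (n choose k) * p ^ m)"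
    by (intro order_trans[OF sum_mono sum_mono2]) (auto simp: assms)
  also have "\<dots> = 2 ^ n * p ^ m"
    by (simp flip: sum_distrib_right of_nat_sum add: choose_row_sum)
  finally show ?thesis .
qed

lemma vn_err_nonneg:
  assumes "0 \<le> e" "e \<le> 1" "0 \<le> p" "p \<le> 1"
  shows "0 \<le> vn_err dv e p"
  unfolding vn_err_eq_binomial_sum
  using assms by (intro sum_nonneg mult_nonneg_nonneg vn_decision_err_nonneg) auto

lemma vn_decision_err_no_wrong:
  assumes "1 \<le> n" "0 \<le> bsc_L e" "bsc_L e < bsc_L p"
  shows "vn_decision_err e (real n * bsc_L p) = 0"
proof (rule vn_decision_err_eq_0)
  have "1 * bsc_L p \<le> real n * bsc_L p"
    using assms by (intro mult_right_mono) auto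
  then show "bsc_L e < real n * bsc_L p"
    using assms by linarith
qed fact

lemma vn_decision_err_no_wrong_le:
  assumes "1 \<le> n" "0 < p" "p < 1/2" "0 < e" "e \<le> 1/2"
  shows "vn_decision_err e (real n * bsc_L p) \<le> p"
proof (cases "e \<le> p")
  case True
  then show ?thesis
    using assms bsc_L_pos[of p] vn_decision_err_le[of e "real n * bsc_L p"] by auto
next
  case False
  then have "bsc_L e < bsc_L p"
    using assms by (intro bsc_L_strict_antimono) auto
  then show ?thesis
    using assms bsc_L_nonneg[of e] by (simp add: vn_decision_err_no_wrong)
qed

lemma vn_err_le:
  assumes "2 \<le> dv" "0 < p" "p < 1/2" "0 < e" "e \<le> 1/2"
  shows "vn_err dv e p \<le> (2 ^ (dv - 1) + 1) * p"
proof -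
  define n where "n = dv - 1"
  define D where "D k = vn_decision_err e ((real n - 2 * real k) * bsc_L p)" for k :: nat
  have "{..n} = insert 0 {1..n}" by auto
  then have "vn_err dv e p = (1 - p) ^ n * D 0 +
      (\<Sum>k\<in>{1..n}. real (n choose k) * p ^ k * (1 - p) ^ (n - k) * D k)"
    by (simp add: vn_err_eq_binomial_sum n_def D_def)
  also have "\<dots> \<le> 1 * p + 2 ^ n * p ^ 1"
    using assms vn_decision_err_no_wrong_le[of n p e]
    by (intro add_mono mult_mono power_le_one binomial_tail_le)
      (auto simp: D_def n_def vn_decision_err_nonneg vn_decision_err_le_one)
  finally show ?thesis by (simp add: n_def algebra_simps)
qed

definition vn_err_slope :: "nat \<Rightarrow> real \<Rightarrow> real" where
  "vn_err_slope dv e = (if dv = 2 then 1 else if dv = 3 then 2 * e else 0)"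

lemma vn_decision_err_one_wrong:
  assumes "2 \<le> dv" "0 < e" "e \<le> 1/2" "0 < p" "p < 1/2" "bsc_L e < bsc_L p"
  shows "real (dv - 1) * vn_decision_err e ((real (dv - 1) - 2) * bsc_L p) = vn_err_slope dv e"
proof -
  have "0 \<le> bsc_L e" "0 < bsc_L p"
    using assms by (simp_all add: bsc_L_nonneg bsc_L_pos)
  consider "dv = 2" | "dv = 3" | "4 \<le> dv"
    using assms by linarith
  then show ?thesis
  proof cases
    case 1
    then show ?thesis
      using assms \<open>0 \<le> bsc_L e\<close> by (simp add: vn_err_slope_def vn_decision_err_eq_1)
  next
    case 2
    then show ?thesis
      using assms by (simp add: vn_err_slope_def vn_decision_err_at_0)
  next
    case 3
    then have "1 * bsc_L p \<le> (real (dv - 1) - 2) * bsc_L p"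
      using \<open>0 < bsc_L p\<close> by (intro mult_right_mono) (auto simp: of_nat_diff)
    then have "bsc_L e < (real (dv - 1) - 2) * bsc_L p"
      using assms by linarith
    then have "vn_decision_err e ((real (dv - 1) - 2) * bsc_L p) = 0"
      using \<open>0 \<le> bsc_L e\<close> vn_decision_err_eq_0 by blast
    then show ?thesis
      using 3 by (simp add: vn_err_slope_def)
  qed
qed

lemma vn_err_expansion:
  assumes "2 \<le> dv" "0 < e" "e \<le> 1/2" "0 < p" "p < 1/2" "bsc_L e < bsc_L p"
  shows "\<bar>vn_err dv e p - vn_err_slope dv e * p * (1 - p) ^ (dv - 2)\<bar> \<le> 2 ^ (dv - 1) * p\<^sup>2"
proof -
  define n where "n = dv - 1"
  define D where "D k = vn_decision_err e ((real n - 2 * real k) * bsc_L p)" for k :: nat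
  define tail where "tail = (\<Sum>k\<in>{2..n}. real (n choose k) * p ^ k * (1 - p) ^ (n - k) * D k)"
  have "D 0 = 0"
    using assms vn_decision_err_no_wrong[of n e p] by (simp add: D_def n_def bsc_L_nonneg)
  moreover have "real n * D 1 = vn_err_slope dv e"
    using vn_decision_err_one_wrong[OF assms] by (simp add: D_def n_def)
  moreover have "{..n} = {0, 1} \<union> {2..n}"
    using assms by (auto simp: n_def)
  then have "vn_err dv e p = (1 - p) ^ n * D 0 + p * (1 - p) ^ (n - 1) * (real n * D 1) + tail"
    by (simp add: vn_err_eq_binomial_sum sum.union_disjoint n_def D_def tail_def algebra_simps)
  ultimately have "vn_err dv e p - vn_err_slope dv e * p * (1 - p) ^ (dv - 2) = tail"
    by (simp add: n_def numeral_2_eq_2)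
  moreover have "0 \<le> tail"
    using assms unfolding tail_def D_def
    by (intro sum_nonneg mult_nonneg_nonneg vn_decision_err_nonneg) auto
  moreover have "tail \<le> 2 ^ n * p\<^sup>2"
    using assms unfolding tail_def D_def
    by (intro binomial_tail_le) (auto simp: vn_decision_err_nonneg vn_decision_err_le_one)
  ultimately show ?thesis
    by (simp add: n_def)
qed

lemma vn_err_ratio_tendsto:
  assumes "2 \<le> dv" "0 < e" "e \<le> 1/2"
  shows "((\<lambda>p. vn_err dv e p / p) \<longlongrightarrow> vn_err_slope dv e) (at_right 0)"
proof -
  have "\<forall>\<^sub>F p in at_right (0::real). 0 < p \<and> p < 1/2"
    using eventually_at_right_real[of 0 "1/2"] by simp
  moreover have "\<forall>\<^sub>F p in at_right 0. bsc_L e < bsc_L p"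
    using bsc_L_tendsto_at_right_0 by (simp add: filterlim_at_top_dense)
  ultimately have "\<forall>\<^sub>F p in at_right 0.
      norm (vn_err dv e p / p - vn_err_slope dv e * (1 - p) ^ (dv - 2)) \<le> 2 ^ (dv - 1) * p"
  proof eventually_elim
    case (elim p)
    then have "norm (vn_err dv e p / p - vn_err_slope dv e * (1 - p) ^ (dv - 2))
        = \<bar>vn_err dv e p - vn_err_slope dv e * p * (1 - p) ^ (dv - 2)\<bar> / p"
      by (simp add: field_simps)
    also have "\<dots> \<le> 2 ^ (dv - 1) * p\<^sup>2 / p"
      using elim assms vn_err_expansion[of dv e p] by (intro divide_right_mono) auto
    finally show ?case
      using elim by (simp add: power2_eq_square)
  qed
  then have "((\<lambda>p. vn_err dv e p / p - vn_err_slope dv e * (1 - p) ^ (dv - 2)) \<longlongrightarrow> 0)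
      (at_right 0)"
    by (rule Lim_null_comparison) (auto intro!: tendsto_eq_intros)
  moreover have "((\<lambda>p. vn_err_slope dv e * (1 - p) ^ (dv - 2)) \<longlongrightarrow> vn_err_slope dv e)
      (at_right 0)"
    by (auto intro!: tendsto_eq_intros)
  ultimately show ?thesis
    using tendsto_add by fastforce
qed

lemma cn_err_has_real_derivative: "(cn_err dc has_real_derivative real (dc - 1)) (at 0)"
  unfolding cn_err_def[abs_def] by (auto intro!: derivative_eq_intros)

lemma cn_err_ratio_tendsto: "((\<lambda>x. cn_err dc x / x) \<longlongrightarrow> real (dc - 1)) (at_right 0)"
proof -
  have "(cn_err dc has_real_derivative real (dc - 1)) (at_right 0)"
    using cn_err_has_real_derivative by (rule has_field_derivative_at_within)
  then show ?thesis
    by (simp add: has_field_derivative_iff cn_err_def)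
qed

lemma cn_err_pos:
  assumes "2 \<le> dc" "0 < x" "x < 1"
  shows "0 < cn_err dc x"
proof -
  have "\<bar>1 - 2 * x\<bar> ^ (dc - 1) < 1"
    using assms by (intro power_less_one_iff[THEN iffD2]) auto
  then have "(1 - 2 * x) ^ (dc - 1) < 1"
    by (metis abs_ge_self order_le_less_trans power_abs power_mono)
  then show ?thesis
    by (simp add: cn_err_def)
qed

lemma cn_err_tendsto_0: "(cn_err dc \<longlongrightarrow> 0) (at_right 0)"
proof -
  have "isCont (cn_err dc) 0"
    by (rule DERIV_isCont[OF cn_err_has_real_derivative])
  then show ?thesis
    by (auto simp: isCont_def cn_err_def intro: tendsto_within_subset)
qed

lemma cn_err_filterlim_at_right_0:
  assumes "2 \<le> dc"
  shows "filterlim (cn_err dc) (at_right 0) (at_right 0)"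
proof (rule filterlim_at_withinI)
  show "(cn_err dc \<longlongrightarrow> 0) (at_right 0)"
    by (rule cn_err_tendsto_0)
  have "\<forall>\<^sub>F x in at_right (0::real). 0 < x \<and> x < 1"
    using eventually_at_right_real[of 0 1] by simp
  then show "\<forall>\<^sub>F x in at_right 0. cn_err dc x \<in> {0<..} - {0}"
    by eventually_elim (use assms cn_err_pos in auto)
qed

lemma vn_err_cn_err_ratio_tendsto:
  assumes "2 \<le> dv" "2 \<le> dc" "0 < e" "e \<le> 1/2"
  shows "((\<lambda>x. vn_err dv e (cn_err dc x) / x) \<longlongrightarrow> vn_err_slope dv e * real (dc - 1))
           (at_right 0)"
proof -
  have "((\<lambda>x. vn_err dv e (cn_err dc x) / cn_err dc x) \<longlongrightarrow> vn_err_slope dv e) (at_right 0)"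
    using filterlim_compose[OF vn_err_ratio_tendsto cn_err_filterlim_at_right_0] assms by simp
  then have "((\<lambda>x. vn_err dv e (cn_err dc x) / cn_err dc x * (cn_err dc x / x))
      \<longlongrightarrow> vn_err_slope dv e * real (dc - 1)) (at_right 0)"
    by (intro tendsto_mult cn_err_ratio_tendsto)
  moreover have "\<forall>\<^sub>F x in at_right (0::real). 0 < x \<and> x < 1"
    using eventually_at_right_real[of 0 1] by simp
  then have "\<forall>\<^sub>F x in at_right 0.
      vn_err dv e (cn_err dc x) / cn_err dc x * (cn_err dc x / x) = vn_err dv e (cn_err dc x) / x"
  proof eventually_elim
    case (elim x)
    then have "cn_err dc x \<noteq> 0"
      using assms cn_err_pos[of dc x] by simp
    then show ?case by simp
  qed
  ultimately show ?thesis
    by (rule Lim_transform_eventually)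
qed

lemma vn_err_cn_err_ratio_bound:
  assumes "2 \<le> dv" "2 \<le> dc"
  shows "\<forall>\<^sub>F x in at_right 0. \<forall>e. 0 < e \<and> e \<le> 1/2 \<longrightarrow>
    \<bar>vn_err dv e (cn_err dc x) / x\<bar> \<le> (2 ^ (dv - 1) + 1) * real dc"
proof -
  have "\<forall>\<^sub>F x in at_right (0::real). 0 < x \<and> x < 1"
    using eventually_at_right_real[of 0 1] by simp
  moreover have "\<forall>\<^sub>F x in at_right 0. cn_err dc x < 1/2"
    using cn_err_tendsto_0 by (rule order_tendstoD) simp
  moreover have "\<forall>\<^sub>F x in at_right 0. cn_err dc x / x < real dc"
    using cn_err_ratio_tendsto by (rule order_tendstoD) (use assms in simp)
  ultimately show ?thesis
  proof eventually_elim
    case (elim x)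
    show ?case
    proof (intro allI impI)
      fix e :: real
      assume e: "0 < e \<and> e \<le> 1/2"
      have cn: "0 < cn_err dc x"
        using elim assms by (simp add: cn_err_pos)
      have "\<bar>vn_err dv e (cn_err dc x) / x\<bar> = vn_err dv e (cn_err dc x) / x"
        using e elim cn by (simp add: vn_err_nonneg)
      also have "\<dots> \<le> (2 ^ (dv - 1) + 1) * cn_err dc x / x"
        using e elim cn assms by (intro divide_right_mono vn_err_le) auto
      also have "\<dots> = (2 ^ (dv - 1) + 1) * (cn_err dc x / x)"
        by simp
      also have "\<dots> \<le> (2 ^ (dv - 1) + 1) * real dc"
        using elim by (intro mult_left_mono) auto
      finally show "\<bar>vn_err dv e (cn_err dc x) / x\<bar> \<le> (2 ^ (dv - 1) + 1) * real dc" .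
    qed
  qed
qed

lemma integral_dominated_convergence_at_right_0:
  fixes s :: "real \<Rightarrow> 'a \<Rightarrow> 'b::{banach, second_countable_topology}"
  assumes "f \<in> borel_measurable M" "\<And>t. s t \<in> borel_measurable M" "integrable M w"
    and "AE x in M. ((\<lambda>t. s t x) \<longlongrightarrow> f x) (at_right 0)"
    and "\<forall>\<^sub>F t in at_right 0. AE x in M. norm (s t x) \<le> w x"
  shows "((\<lambda>t. integral\<^sup>L M (s t)) \<longlongrightarrow> integral\<^sup>L M f) (at_right 0)"
proof -
  have "((\<lambda>t. integral\<^sup>L M (s (inverse t))) \<longlongrightarrow> integral\<^sup>L M f) at_top"
  proof (rule integral_dominated_convergence_at_top[OF assms(1-3)])
    show "AE x in M. ((\<lambda>t. s (inverse t) x) \<longlongrightarrow> f x) at_top"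
      using assms(4) by eventually_elim (simp add: filterlim_at_right_to_top)
    show "\<forall>\<^sub>F t in at_top. AE x in M. norm (s (inverse t) x) \<le> w x"
      using assms(5) by (simp add: eventually_at_right_to_top)
  qed
  then show ?thesis
    by (simp add: filterlim_at_right_to_top)
qed

lemma integral_vn_err_cn_err_ratio_tendsto:
  assumes "finite_measure M" "sets M = sets borel" "AE e in M. 0 < e \<and> e \<le> 1/2"
    and "2 \<le> dv" "2 \<le> dc"
  shows "((\<lambda>x. \<integral>e. vn_err dv e (cn_err dc x) / x \<partial>M)
           \<longlongrightarrow> (\<integral>e. vn_err_slope dv e \<partial>M) * real (dc - 1)) (at_right 0)"
proof -
  interpret finite_measure M by fact
  have measurable_M: "measurable M = measurable borel"
    using measurable_cong_sets[OF assms(2) refl] by blast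
  have "((\<lambda>x. \<integral>e. vn_err dv e (cn_err dc x) / x \<partial>M)
      \<longlongrightarrow> (\<integral>e. vn_err_slope dv e * real (dc - 1) \<partial>M)) (at_right 0)"
  proof (rule integral_dominated_convergence_at_right_0[where w = "\<lambda>_. (2 ^ (dv - 1) + 1) * real dc"])
    show "(\<lambda>e. vn_err_slope dv e * real (dc - 1)) \<in> borel_measurable M"
      unfolding measurable_M vn_err_slope_def by measurable
    show "(\<lambda>e. vn_err dv e (cn_err dc x) / x) \<in> borel_measurable M" for x
      unfolding measurable_M vn_err_def by measurable
    show "integrable M (\<lambda>_. (2 ^ (dv - 1) + 1) * real dc)"
      by simp
    show "AE e in M. ((\<lambda>x. vn_err dv e (cn_err dc x) / x)
        \<longlongrightarrow> vn_err_slope dv e * real (dc - 1)) (at_right 0)"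
      using assms(3) by eventually_elim (use assms vn_err_cn_err_ratio_tendsto in auto)
    show "\<forall>\<^sub>F x in at_right 0. AE e in M.
        norm (vn_err dv e (cn_err dc x) / x) \<le> (2 ^ (dv - 1) + 1) * real dc"
      using vn_err_cn_err_ratio_bound[OF assms(4,5)]
      by eventually_elim (use assms(3) in \<open>auto elim: eventually_mono\<close>)
  qed
  then show ?thesis
    by simp
qed

lemma bmp_update_has_real_derivative_at_right_0:
  assumes "finite_measure M" "sets M = sets borel" "AE e in M. 0 < e \<and> e \<le> 1/2" "2 \<le> dc"
  shows "(bmp_update M lam dmax dc has_real_derivative
           (\<Sum>i\<in>{2..dmax}. lam i * (\<integral>e. vn_err_slope i e \<partial>M)) * real (dc - 1)) (at_right 0)"
proof -
  have "((\<lambda>x. \<Sum>i\<in>{2..dmax}. lam i * (\<integral>e. vn_err i e (cn_err dc x) / x \<partial>M))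
      \<longlongrightarrow> (\<Sum>i\<in>{2..dmax}. lam i * ((\<integral>e. vn_err_slope i e \<partial>M) * real (dc - 1))))
      (at_right 0)"
    using assms by (intro tendsto_sum tendsto_mult_left integral_vn_err_cn_err_ratio_tendsto) auto
  moreover have "\<forall>\<^sub>F x in at_right (0::real). 0 < x"
    by (simp add: eventually_at_right_less)
  then have "\<forall>\<^sub>F x in at_right 0.
      (\<Sum>i\<in>{2..dmax}. lam i * (\<integral>e. vn_err i e (cn_err dc x) / x \<partial>M))
      = (bmp_update M lam dmax dc x - bmp_update M lam dmax dc 0) / (x - 0)"
    by eventually_elim (simp add: bmp_update_def sum_divide_distrib)
  ultimately show ?thesis
    unfolding has_field_derivative_iff
    by (simp add: sum_distrib_right mult.assoc Lim_transform_eventually)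
qed

lemma sum_integral_vn_err_slope:
  assumes "prob_space M" "\<And>i. i \<notin> {2..dmax} \<Longrightarrow> lam i = 0"
  shows "(\<Sum>i\<in>{2..dmax}. lam i * (\<integral>e. vn_err_slope i e \<partial>M))
           = lam 2 + 2 * (\<integral>e. e \<partial>M) * lam 3"
proof -
  interpret prob_space M by fact
  have "(\<Sum>i\<in>{2..dmax}. lam i * (\<integral>e. vn_err_slope i e \<partial>M))
      = (\<Sum>i\<in>{2..dmax}. (if i = 2 then lam 2 else 0) +
                          (if i = 3 then 2 * (\<integral>e. e \<partial>M) * lam 3 else 0))"
    by (intro sum.cong) (auto simp: vn_err_slope_def prob_space)
  also have "\<dots> = lam 2 + 2 * (\<integral>e. e \<partial>M) * lam 3"
    using assms by (simp add: sum.distrib)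
  finally show ?thesis .
qed

theorem theorem2:
  fixes M :: "real measure" and lam :: "nat \<Rightarrow> real" and dmax dc :: nat
  assumes "prob_space M"
    and "sets M = sets borel"
    and "AE e in M. 0 < e \<and> e \<le> 1/2"
    and "dc \<ge> 2"
    and "\<And>i. lam i \<ge> 0"
    and "\<And>i. i \<notin> {2..dmax} \<Longrightarrow> lam i = 0"
    and "(\<Sum>i\<in>{2..dmax}. lam i) = 1"
  shows "bmp_stable M lam dmax dc \<longleftrightarrow>
           (lam 2 + 2 * (\<integral>e. e \<partial>M) * lam 3) * (real dc - 1) < 1"
proof -
  have "finite_measure M"
    using assms(1) by (rule prob_space.axioms)
  then have "(bmp_update M lam dmax dc has_real_derivative
      (\<Sum>i\<in>{2..dmax}. lam i * (\<integral>e. vn_err_slope i e \<partial>M)) * real (dc - 1)) (at_right 0)"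
    using assms(2-4) by (rule bmp_update_has_real_derivative_at_right_0)
  then have "(bmp_update M lam dmax dc has_real_derivative
      (lam 2 + 2 * (\<integral>e. e \<partial>M) * lam 3) * (real dc - 1)) (at_right 0)"
    using sum_integral_vn_err_slope[of M dmax lam] assms by (simp add: of_nat_diff)
  then show ?thesis
    unfolding bmp_stable_def
    using has_field_derivative_unique[where A = "{0<..}"] trivial_limit_at_right_real by metis
qed

end
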